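(* Let $\lambda_1,\lambda_2,\sigma_1,\sigma_2\in\mathbb{C}^*$ and $\eta_1,\eta_2\in\mathbb{C}$. Then $\Omega(\lambda_1,\eta_1,\sigma_1,0)\otimes\Omega(\lambda_2,\eta_2,\sigma_2,0)$ is an irreducible $\mathcal{G}$-module if and only if $\lambda_1\neq\lambda_2$.
   Context: The planar Galilean conformal algebra $\mathcal{G}$ is the complex Lie algebra with basis $\{L_m,H_m,I_m,J_m\mid m\in\mathbb{Z}\}$ and brackets $[L_m,L_n]=(n-m)L_{m+n}$, $[L_m,H_n]=nH_{m+n}$, $[L_m,I_n]=(n-m)I_{m+n}$, $[L_m,J_n]=(n-m)J_{m+n}$, $[H_m,I_n]=I_{m+n}$, $[H_m,J_n]=-J_{m+n}$, and $[H_m,H_n]=[I_m,I_n]=[J_m,J_n]=[I_m,J_n]=0$ for all $m,n\in\mathbb{Z}$. For $\lambda,\sigma\in\mathbb{C}^*$, $\eta\in\mathbb{C}$, the module $\Omega(\lambda,\eta,\sigma,0)$ is $\mathbb{C}[X,Y]$ with $L_m f(X,Y)=\lambda^m(Y-mX+m\eta)f(X,Y-m)$, $H_m f(X,Y)=\lambda^m X f(X,Y-m)$, $I_m f(X,Y)=\lambda^m\sigma f(X-1,Y-m)$, $J_m f(X,Y)=0$. The tensor product of $\mathcal{G}$-modules has action $x(v\otimes w)=xv\otimes w+v\otimes xw$. *)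

theory Defs
  imports Complex_Main "HOL-Computational_Algebra.Polynomial"
begin

text \<open>Basis elements of the planar Galilean conformal algebra.\<close>
datatype gen = L int | H int | I int | J int

text \<open>Two-variable polynomials f(X,Y) over a coefficient ring are 'a poly poly:
  the inner variable is X, the outer variable is Y.\<close>

definition shY :: "int \<Rightarrow> 'a::comm_ring_1 poly poly \<Rightarrow> 'a poly poly" where
  "shY m f = pcompose f [: - of_int m, 1 :]"

definition shX :: "'a::comm_ring_1 poly poly \<Rightarrow> 'a poly poly" where
  "shX f = map_poly (\<lambda>c. pcompose c [: -1, 1 :]) f"

definition varX :: "'a::comm_ring_1 poly poly" where "varX = [:[:0, 1:]:]"
definition varY :: "'a::comm_ring_1 poly poly" where "varY = [:0, 1:]"

text \<open>Action of the module Omega(lam,eta,sig,0) on C[X,Y], extended linearly over a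
  commutative coefficient ring 'a into which the complex scalars embed via \<iota>.
  With 'a = complex and \<iota> = id this is exactly the module of the paper.\<close>
definition omega_act ::
  "(complex \<Rightarrow> 'a::comm_ring_1) \<Rightarrow> complex \<Rightarrow> complex \<Rightarrow> complex \<Rightarrow> gen
     \<Rightarrow> 'a poly poly \<Rightarrow> 'a poly poly" where
  "omega_act \<iota> lam eta sig g f = (case g of
      L m \<Rightarrow> [:[:\<iota> (lam powi m):]:] * (varY - of_int m * varX + [:[:\<iota> (of_int m * eta):]:]) * shY m f
    | H m \<Rightarrow> [:[:\<iota> (lam powi m):]:] * varX * shY m f
    | I m \<Rightarrow> [:[:\<iota> (lam powi m * sig):]:] * shY m (shX f)
    | J m \<Rightarrow> 0)"

text \<open>The tensor product C[X1,Y1] (x) C[X2,Y2], identified with C[X1,Y1,X2,Y2] =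
  complex poly poly poly poly (variables from innermost: X1, Y1, X2, Y2).
  x (f (x) g) = x f (x) g + f (x) x g.\<close>
definition tensor_act ::
  "complex \<Rightarrow> complex \<Rightarrow> complex \<Rightarrow> complex \<Rightarrow> complex \<Rightarrow> complex \<Rightarrow> gen
     \<Rightarrow> complex poly poly poly poly \<Rightarrow> complex poly poly poly poly" where
  "tensor_act lam1 eta1 sig1 lam2 eta2 sig2 g F =
     map_poly (map_poly (omega_act id lam1 eta1 sig1 g)) F
     + omega_act (\<lambda>c. [:[:c:]:]) lam2 eta2 sig2 g F"

text \<open>Submodules and irreducibility for a module structure on a ring 'v containing C
  via emb (scalar multiplication = multiplication by emb c).\<close>
definition is_submodule :: "(gen \<Rightarrow> 'v \<Rightarrow> 'v) \<Rightarrow> (complex \<Rightarrow> 'v::comm_ring_1) \<Rightarrow> 'v set \<Rightarrow> bool" where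
  "is_submodule act emb W \<longleftrightarrow>
     0 \<in> W \<and> (\<forall>x\<in>W. \<forall>y\<in>W. x + y \<in> W) \<and> (\<forall>c. \<forall>x\<in>W. emb c * x \<in> W)
     \<and> (\<forall>g. \<forall>x\<in>W. act g x \<in> W)"

definition irreducible_module :: "(gen \<Rightarrow> 'v \<Rightarrow> 'v) \<Rightarrow> (complex \<Rightarrow> 'v::comm_ring_1) \<Rightarrow> bool" where
  "irreducible_module act emb \<longleftrightarrow>
     (UNIV :: 'v set) \<noteq> {0} \<and> (\<forall>W. is_submodule act emb W \<longrightarrow> W = {0} \<or> W = UNIV)"

end

theory Submission
  imports Defs
begin

text \<open>
  Suppose \<open>lam1 \<noteq> lam2\<close> and let \<open>F\<close> lie in a nonzero submodule \<open>W\<close>. As functions of \<open>m \<ge> 0\<close>,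
  \<open>H\<^sub>m F\<close>, \<open>L\<^sub>m F\<close> and \<open>I\<^sub>m F\<close> have the form \<open>lam1\<^sup>m A(m) + lam2\<^sup>m B(m)\<close> with \<open>A\<close>, \<open>B\<close>
  polynomial in \<open>m\<close>, because translations act unipotently on polynomials. Such a sum lies in \<open>W\<close>
  for all \<open>m\<close> only if every \<open>A(m)\<close> and \<open>B(m)\<close> does; taking \<open>m = 0, 1\<close> shows that \<open>W\<close> is an
  ideal stable under \<open>X1 \<mapsto> X1 - 1\<close>, \<open>(X1, Y1) \<mapsto> (X1 - 1, Y1 - 1)\<close> and the analogous translations
  of the second factor. The difference operators of these translations commute, preserve \<open>W\<close>
  and are locally nilpotent, so they annihilate a common nonzero element of \<open>W\<close>. It is invariant
  under all translations, hence a nonzero constant, so \<open>1 \<in> W\<close>.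

  If \<open>lam1 = lam2\<close>, the action involves the variables only through \<open>X1 + X2\<close> and \<open>Y1 + Y2\<close>, so
  the polynomials invariant under \<open>(X1, Y1, X2, Y2) \<mapsto> (X1 + s, Y1 + t, X2 - s, Y2 - t)\<close> form a
  proper nonzero submodule.
\<close>

definition is_ring_hom :: "('a::comm_ring_1 \<Rightarrow> 'b::comm_ring_1) \<Rightarrow> bool" where
  "is_ring_hom f \<longleftrightarrow>
     f 0 = 0 \<and> f 1 = 1 \<and> (\<forall>x y. f (x + y) = f x + f y) \<and> (\<forall>x y. f (x * y) = f x * f y)"

lemma is_ring_homD:
  assumes "is_ring_hom f"
  shows ring_hom_0: "f 0 = 0" and ring_hom_1: "f 1 = 1"
    and ring_hom_add: "f (x + y) = f x + f y" and ring_hom_mult: "f (x * y) = f x * f y"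
  using assms unfolding is_ring_hom_def by auto

lemma ring_hom_uminus:
  assumes f: "is_ring_hom f"
  shows "f (- x) = - f x"
  using ring_hom_add[OF f, of x "- x"] by (simp add: ring_hom_0[OF f] eq_neg_iff_add_eq_0 add.commute)

lemma ring_hom_diff:
  assumes f: "is_ring_hom f"
  shows "f (x - y) = f x - f y"
  using ring_hom_add[OF f, of x "- y"] by (simp add: ring_hom_uminus[OF f])

lemma ring_hom_of_nat:
  assumes f: "is_ring_hom f"
  shows "f (of_nat n) = of_nat n"
  by (induction n) (simp_all add: ring_hom_0[OF f] ring_hom_1[OF f] ring_hom_add[OF f])

lemma ring_hom_of_int:
  assumes f: "is_ring_hom f"
  shows "f (of_int k) = of_int k"
proof (induction k rule: int_induct[where k = 0])
  case (step1 i)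
  then show ?case by (simp add: ring_hom_add[OF f] ring_hom_1[OF f])
next
  case (step2 i)
  then show ?case by (simp add: ring_hom_diff[OF f] ring_hom_1[OF f])
qed (simp add: ring_hom_0[OF f])

lemma ring_hom_power:
  assumes f: "is_ring_hom f"
  shows "f (x ^ n) = f x ^ n"
  by (induction n) (simp_all add: ring_hom_1[OF f] ring_hom_mult[OF f])

lemma is_ring_hom_id: "is_ring_hom (\<lambda>x. x)"
  unfolding is_ring_hom_def by simp

lemma is_ring_hom_comp: "is_ring_hom f \<Longrightarrow> is_ring_hom g \<Longrightarrow> is_ring_hom (\<lambda>x. f (g x))"
  unfolding is_ring_hom_def by simp

lemma map_poly_add_hom:
  assumes f: "is_ring_hom f"
  shows "map_poly f (p + q) = map_poly f p + map_poly f q"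
  by (intro poly_eqI) (simp add: coeff_map_poly ring_hom_0[OF f] ring_hom_add[OF f])

lemma map_poly_mult_hom:
  assumes f: "is_ring_hom f"
  shows "map_poly f (p * q) = map_poly f p * map_poly f q"
proof (induction p)
  case (pCons a p)
  have "map_poly f (pCons a p * q) = map_poly f (smult a q) + map_poly f (pCons 0 (p * q))"
    by (simp add: mult_pCons_left map_poly_add_hom[OF f])
  also have "\<dots> = map_poly f (pCons a p) * map_poly f q"
    by (simp add: map_poly_smult map_poly_pCons mult_pCons_left pCons.IH
        ring_hom_0[OF f] ring_hom_mult[OF f])
  finally show ?case .
qed simp

lemma is_ring_hom_map_poly:
  assumes f: "is_ring_hom f"
  shows "is_ring_hom (map_poly f)"
  unfolding is_ring_hom_def[of "map_poly f"]
  by (simp add: ring_hom_0[OF f] ring_hom_1[OF f] map_poly_add_hom[OF f] map_poly_mult_hom[OF f])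

lemma map_poly_id_fun [simp]: "map_poly (\<lambda>x. x) = (\<lambda>x. x)"
  by (rule ext) simp

definition translate :: "'a::comm_ring_1 \<Rightarrow> 'a poly \<Rightarrow> 'a poly" where
  "translate c p = pcompose p [:c, 1:]"

lemma translate_0 [simp]: "translate 0 = (\<lambda>p. p)"
  unfolding translate_def by simp

lemma translate_zero [simp]: "translate c 0 = 0"
  unfolding translate_def by simp

lemma translate_one [simp]: "translate c 1 = 1"
  unfolding translate_def by (simp add: pcompose_1)

lemma translate_const [simp]: "translate c [:a:] = [:a:]"
  unfolding translate_def by simp

lemma translate_var: "translate c [:0, 1:] = [:0, 1:] + [:c:]"
  unfolding translate_def by (simp add: pcompose_pCons)

lemma is_ring_hom_translate: "is_ring_hom (translate c)"
  unfolding is_ring_hom_def translate_def by (simp add: pcompose_add pcompose_mult pcompose_1)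

lemma degree_translate_diff_less:
  fixes p :: "'a::idom poly"
  assumes "degree p \<noteq> 0"
  shows "degree (translate c p - p) < degree p"
proof -
  have deg: "degree (translate c p) = degree p"
    unfolding translate_def by (simp add: degree_pcompose)
  have "lead_coeff (translate c p) = lead_coeff p"
    unfolding translate_def by (subst lead_coeff_comp) simp_all
  then have "coeff (translate c p - p) (degree p) = 0"
    by (simp add: deg)
  then have "degree (translate c p - p) \<noteq> degree p"
    using assms by (metis degree_0 leading_coeff_0_iff)
  moreover have "degree (translate c p - p) \<le> degree p"
    using degree_diff_le[of "translate c p" "degree p" p] deg by simp
  ultimately show ?thesis
    by simp
qed

lemma translate_invariant_const:
  fixes p :: "'a::{idom,ring_char_0} poly"
  assumes "c \<noteq> 0" and "translate c p = p"
  shows "p = [:coeff p 0:]"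
proof -
  have "poly p (c + x) = poly p x" for x
    using arg_cong[OF assms(2), of "\<lambda>q. poly q x"] by (simp add: translate_def poly_pcompose)
  then have "poly p (of_nat n * c) = poly p 0" for n
    by (induction n) (simp_all add: distrib_right)
  then have "range (\<lambda>n. of_nat n * c) \<subseteq> {x. poly (p - [:poly p 0:]) x = 0}"
    by auto
  moreover have "infinite (range (\<lambda>n. of_nat n * c))"
    using assms(1) by (intro range_inj_infinite) (simp add: inj_on_def)
  ultimately have "p - [:poly p 0:] = 0"
    using poly_roots_finite finite_subset by blast
  then show ?thesis by (simp add: poly_0_coeff_0)
qed

section \<open>Locally nilpotent operators\<close>

definition locally_nilpotent :: "('a::zero \<Rightarrow> 'a) \<Rightarrow> bool" where
  "locally_nilpotent D \<longleftrightarrow> (\<forall>x. \<exists>n. (D ^^ n) x = 0)"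

lemma funpow_fixpoint: "f z = z \<Longrightarrow> (f ^^ n) z = z"
  by (induction n) simp_all

lemma funpow_eq_fixpoint_mono:
  assumes "f z = z" and "(f ^^ n) x = z" and "n \<le> m"
  shows "(f ^^ m) x = z"
proof -
  obtain k where "m = k + n" using \<open>n \<le> m\<close> by (metis le_add_diff_inverse2)
  then show ?thesis using assms by (simp add: funpow_add funpow_fixpoint)
qed

lemma locally_nilpotent_translate_diff:
  "locally_nilpotent (\<lambda>q. translate c q - (q :: 'a::idom poly))"
proof -
  have "((\<lambda>q. translate c q - q) ^^ Suc n) p = 0" if "degree p \<le> n" for n and p :: "'a poly"
    using that
  proof (induction n arbitrary: p)
    case 0
    then obtain a where "p = [:a:]" by (metis degree_eq_zeroE le_zero_eq)
    then show ?case by simp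
  next
    case (Suc n)
    show ?case
    proof (cases "degree p = 0")
      case True
      then obtain a where "p = [:a:]" by (metis degree_eq_zeroE)
      then show ?thesis
        by (simp only: funpow_Suc_right o_apply) (simp add: funpow_fixpoint translate_def)
    next
      case False
      then have "degree (translate c p - p) \<le> n"
        using degree_translate_diff_less[of p c] Suc.prems by simp
      then show ?thesis
        using Suc.IH by (simp only: funpow_Suc_right o_apply)
    qed
  qed
  then show ?thesis unfolding locally_nilpotent_def by blast
qed

lemma map_poly_funpow:
  fixes f :: "'a::zero \<Rightarrow> 'a"
  assumes "f 0 = 0"
  shows "(map_poly f ^^ n) p = map_poly (f ^^ n) p"
  by (induction n arbitrary: p) (simp_all add: map_poly_map_poly assms funpow_fixpoint)

lemma locally_nilpotent_map_poly:
  assumes "f 0 = 0" and "locally_nilpotent f"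
  shows "locally_nilpotent (map_poly f)"
  unfolding locally_nilpotent_def
proof
  fix p
  show "\<exists>n. (map_poly f ^^ n) p = 0"
  proof (induction p)
    case (pCons a p)
    obtain n1 where n1: "(f ^^ n1) a = 0" using assms(2) unfolding locally_nilpotent_def by blast
    obtain n2 where n2: "(map_poly f ^^ n2) p = 0" using pCons.IH by blast
    have "(f ^^ max n1 n2) a = 0"
      using funpow_eq_fixpoint_mono[OF assms(1) n1] by simp
    moreover have "(map_poly f ^^ max n1 n2) p = 0"
      using funpow_eq_fixpoint_mono[OF map_poly_0 n2] by simp
    ultimately have "(map_poly f ^^ max n1 n2) (pCons a p) = 0"
      by (simp add: map_poly_funpow assms(1) map_poly_pCons funpow_fixpoint)
    then show ?case by blast
  qed (intro exI[of _ 0], simp)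
qed

lemma locally_nilpotent_map_poly_diff:
  assumes "f 0 = 0" and "locally_nilpotent (\<lambda>x. f x - x)"
  shows "locally_nilpotent (\<lambda>p. map_poly f p - p)"
proof -
  have "(\<lambda>p. map_poly f p - p) = map_poly (\<lambda>x. f x - x)"
    by (intro ext poly_eqI) (simp add: coeff_map_poly assms(1))
  then show ?thesis using locally_nilpotent_map_poly[of "\<lambda>x. f x - x"] assms by simp
qed

lemma locally_nilpotent_comp:
  fixes S D :: "'a::zero \<Rightarrow> 'a"
  assumes comm: "\<And>x. S (D x) = D (S x)" and "S 0 = 0" and "locally_nilpotent D"
  shows "locally_nilpotent (\<lambda>x. S (D x))"
proof -
  have "D ((S ^^ n) x) = (S ^^ n) (D x)" for n x
    by (induction n) (simp_all add: comm[symmetric])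
  then have "((\<lambda>x. S (D x)) ^^ n) x = (S ^^ n) ((D ^^ n) x)" for n x
    by (induction n arbitrary: x) (simp_all add: funpow_swap1)
  then show ?thesis
    using assms(2,3) unfolding locally_nilpotent_def by (metis funpow_fixpoint)
qed

lemma funpow_last_nonzero:
  fixes D :: "'a::zero \<Rightarrow> 'a"
  assumes "x \<noteq> 0" and "(D ^^ n) x = 0"
  shows "\<exists>k. (D ^^ k) x \<noteq> 0 \<and> D ((D ^^ k) x) = 0"
  using assms(2)
proof (induction n)
  case (Suc n)
  then show ?case by (cases "(D ^^ n) x = 0") auto
qed (simp add: assms(1))

lemma funpow_commute:
  assumes "\<And>x. f (g x) = g (f x)"
  shows "f ((g ^^ n) x) = (g ^^ n) (f x)"
  by (induction n) (simp_all add: assms)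

lemma funpow_closed: "(\<And>x. x \<in> W \<Longrightarrow> D x \<in> W) \<Longrightarrow> x \<in> W \<Longrightarrow> (D ^^ n) x \<in> W"
  by (induction n) auto

lemma common_kernel_nonzero:
  fixes Ds :: "('a::zero \<Rightarrow> 'a) list"
  assumes "\<forall>D\<in>set Ds. D 0 = 0 \<and> locally_nilpotent D \<and> (\<forall>x\<in>W. D x \<in> W)"
    and "\<forall>D\<in>set Ds. \<forall>D'\<in>set Ds. \<forall>x. D (D' x) = D' (D x)"
    and "G \<in> W" and "G \<noteq> 0"
  shows "\<exists>G'\<in>W. G' \<noteq> 0 \<and> (\<forall>D\<in>set Ds. D G' = 0)"
  using assms(1,2)
proof (induction Ds)
  case (Cons D Ds)
  then obtain G1 where G1: "G1 \<in> W" "G1 \<noteq> 0" "\<forall>D'\<in>set Ds. D' G1 = 0"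
    by auto
  have "locally_nilpotent D"
    using Cons.prems(1) by simp
  then obtain n where "(D ^^ n) G1 = 0"
    unfolding locally_nilpotent_def by blast
  then obtain k where k: "(D ^^ k) G1 \<noteq> 0" "D ((D ^^ k) G1) = 0"
    using funpow_last_nonzero[OF G1(2)] by blast
  have "(D ^^ k) G1 \<in> W"
    using Cons.prems(1) G1(1) by (intro funpow_closed) auto
  moreover have "D' ((D ^^ k) G1) = 0" if "D' \<in> set Ds" for D'
    using Cons.prems that G1(3) funpow_commute[of D' D k G1] funpow_fixpoint[of D 0 k] by auto
  ultimately show ?case
    using k by auto
qed (use assms(3,4) in auto)

section \<open>Polynomial sequences and separation of exponentials\<close>

definition fwd_diff :: "(nat \<Rightarrow> 'a::ab_group_add) \<Rightarrow> nat \<Rightarrow> 'a" where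
  "fwd_diff A m = A (Suc m) - A m"

text \<open>Equivalently, \<open>A m\<close> is a polynomial in \<open>m\<close>.\<close>

definition poly_seq :: "(nat \<Rightarrow> 'a::comm_ring_1) \<Rightarrow> bool" where
  "poly_seq A \<longleftrightarrow> (\<exists>n. (fwd_diff ^^ n) A = (\<lambda>_. 0))"

lemma fwd_diff_zero: "fwd_diff (\<lambda>_. 0) = (\<lambda>_. 0)"
  by (rule ext) (simp add: fwd_diff_def)

lemma fwd_diff_funpow_lincomb:
  "(fwd_diff ^^ n) (\<lambda>m. a * A m + b * B m) =
     (\<lambda>m. a * (fwd_diff ^^ n) A m + b * (fwd_diff ^^ n) B m :: 'a::comm_ring_1)"
  by (induction n) (simp_all add: fwd_diff_def algebra_simps)

lemma poly_seq_lincomb: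
  assumes "poly_seq A" and "poly_seq B"
  shows "poly_seq (\<lambda>m. a * A m + b * B m)"
proof -
  obtain n k where n: "(fwd_diff ^^ n) A = (\<lambda>_. 0)" and k: "(fwd_diff ^^ k) B = (\<lambda>_. 0)"
    using assms unfolding poly_seq_def by blast
  have "(fwd_diff ^^ max n k) A = (\<lambda>_. 0)" "(fwd_diff ^^ max n k) B = (\<lambda>_. 0)"
    using funpow_eq_fixpoint_mono[OF fwd_diff_zero n] funpow_eq_fixpoint_mono[OF fwd_diff_zero k]
    by simp_all
  then show ?thesis
    unfolding poly_seq_def by (intro exI[of _ "max n k"]) (simp add: fwd_diff_funpow_lincomb)
qed

lemma poly_seq_add: "poly_seq A \<Longrightarrow> poly_seq B \<Longrightarrow> poly_seq (\<lambda>m. A m + B m)"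
  using poly_seq_lincomb[of A B 1 1] by simp

lemma poly_seq_diff: "poly_seq A \<Longrightarrow> poly_seq B \<Longrightarrow> poly_seq (\<lambda>m. A m - B m)"
  using poly_seq_lincomb[of A B 1 "-1"] by simp

lemma poly_seq_cmult: "poly_seq A \<Longrightarrow> poly_seq (\<lambda>m. c * A m)"
  using poly_seq_lincomb[of A A c 0] by simp

lemma poly_seq_of_nat_mult:
  assumes "poly_seq A"
  shows "poly_seq (\<lambda>m. of_nat m * A m)"
proof -
  have "(fwd_diff ^^ Suc n) (\<lambda>m. of_nat m * A m) = (\<lambda>_. 0)"
    if "(fwd_diff ^^ n) A = (\<lambda>_. 0)" for n and A :: "nat \<Rightarrow> 'a"
    using that
  proof (induction n arbitrary: A)
    case 0
    then show ?case by (simp add: fwd_diff_def)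
  next
    case (Suc n)
    have shift: "(fwd_diff ^^ k) (\<lambda>m. B (Suc m)) = (\<lambda>m. (fwd_diff ^^ k) B (Suc m))"
      for k and B :: "nat \<Rightarrow> 'a"
      by (induction k) (simp_all add: fwd_diff_def)
    have step: "fwd_diff (\<lambda>m. of_nat m * A m) = (\<lambda>m. 1 * (of_nat m * fwd_diff A m) + 1 * A (Suc m))"
      by (rule ext) (simp add: fwd_diff_def algebra_simps)
    have "(fwd_diff ^^ Suc (Suc n)) (\<lambda>m. of_nat m * A m) =
        (fwd_diff ^^ Suc n) (fwd_diff (\<lambda>m. of_nat m * A m))"
      by (simp only: funpow_Suc_right o_apply)
    also have "\<dots> =
        (\<lambda>m. (fwd_diff ^^ Suc n) (\<lambda>m. of_nat m * fwd_diff A m) m + (fwd_diff ^^ Suc n) A (Suc m))"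
      by (simp only: step fwd_diff_funpow_lincomb shift) simp
    also have "\<dots> = (\<lambda>_. 0)"
      using Suc.IH[of "fwd_diff A"] Suc.prems
      by (simp add: funpow_Suc_right del: funpow.simps)
    finally show ?case .
  qed
  then show ?thesis
    using assms unfolding poly_seq_def by blast
qed

lemma poly_seq_funpow:
  fixes T :: "'a::comm_ring_1 \<Rightarrow> 'a"
  assumes diff: "\<And>x y. T (x - y) = T x - T y" and nil: "locally_nilpotent (\<lambda>x. T x - x)"
  shows "poly_seq (\<lambda>n. (T ^^ n) x)"
proof -
  define D where "D = (\<lambda>x. T x - x)"
  have diff_n: "(T ^^ n) (x - y) = (T ^^ n) x - (T ^^ n) y" for n x y
    by (induction n) (simp_all add: diff)
  have "(fwd_diff ^^ k) (\<lambda>n. (T ^^ n) y) = (\<lambda>n. (T ^^ n) ((D ^^ k) y))" for k y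
  proof (induction k arbitrary: y)
    case (Suc k)
    have "fwd_diff (\<lambda>n. (T ^^ n) y) = (\<lambda>n. (T ^^ n) (D y))"
      by (rule ext) (simp add: fwd_diff_def D_def diff_n funpow_swap1)
    then show ?case
      by (simp only: funpow_Suc_right o_apply Suc.IH)
  qed simp
  moreover obtain N where "(D ^^ N) x = 0"
    using nil unfolding locally_nilpotent_def D_def by blast
  moreover have "(T ^^ n) 0 = 0" for n
    using diff_n[of n 0 0] by simp
  ultimately have "(fwd_diff ^^ N) (\<lambda>n. (T ^^ n) x) = (\<lambda>_. 0)"
    by simp
  then show ?thesis
    unfolding poly_seq_def by blast
qed

definition is_subspace :: "('k::field \<Rightarrow> 'v::comm_ring_1) \<Rightarrow> 'v set \<Rightarrow> bool" where
  "is_subspace emb W \<longleftrightarrow>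
     0 \<in> W \<and> (\<forall>x\<in>W. \<forall>y\<in>W. x + y \<in> W) \<and> (\<forall>c. \<forall>x\<in>W. emb c * x \<in> W)"

lemma is_subspaceD:
  assumes "is_subspace emb W"
  shows subspace_0: "0 \<in> W"
    and subspace_add: "x \<in> W \<Longrightarrow> y \<in> W \<Longrightarrow> x + y \<in> W"
    and subspace_scale: "x \<in> W \<Longrightarrow> emb c * x \<in> W"
  using assms unfolding is_subspace_def by auto

lemma subspace_diff:
  assumes emb: "is_ring_hom emb" and W: "is_subspace emb W" and "x \<in> W" "y \<in> W"
  shows "x - y \<in> W"
  using subspace_add[OF W \<open>x \<in> W\<close> subspace_scale[OF W \<open>y \<in> W\<close>, of "-1"]]
  by (simp add: ring_hom_uminus[OF emb] ring_hom_1[OF emb])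

lemma subspace_cancel:
  assumes emb: "is_ring_hom emb" and W: "is_subspace emb W" and "c \<noteq> 0" and "emb c * x \<in> W"
  shows "x \<in> W"
  using subspace_scale[OF W \<open>emb c * x \<in> W\<close>, of "inverse c"] \<open>c \<noteq> 0\<close>
  by (simp add: mult.assoc[symmetric] ring_hom_mult[OF emb, symmetric] ring_hom_1[OF emb])

definition twisted_diff :: "'a::comm_ring_1 \<Rightarrow> (nat \<Rightarrow> 'a) \<Rightarrow> nat \<Rightarrow> 'a" where
  "twisted_diff c u m = u (Suc m) - c * u m"

lemma twisted_diff_commute: "twisted_diff c (twisted_diff d u) = twisted_diff d (twisted_diff c u)"
  unfolding twisted_diff_def by (rule ext) (simp add: algebra_simps)

lemma twisted_diff_zero: "twisted_diff c (\<lambda>_. 0) = (\<lambda>_. 0)"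
  by (rule ext) (simp add: twisted_diff_def)

lemma twisted_diff_funpow_exp:
  "(twisted_diff c ^^ n) (\<lambda>m. c ^ m * A m) = (\<lambda>m. c ^ (m + n) * (fwd_diff ^^ n) A m)"
  by (induction n) (simp_all add: twisted_diff_def fwd_diff_def algebra_simps)

lemma subspace_twisted_diff:
  assumes emb: "is_ring_hom emb" and W: "is_subspace emb W" and "\<forall>m. u m \<in> W"
  shows "\<forall>m. twisted_diff (emb a) u m \<in> W"
  using assms unfolding twisted_diff_def by (auto intro: subspace_diff subspace_scale)

lemma subspace_from_twisted_diff:
  assumes emb: "is_ring_hom emb" and W: "is_subspace emb W" and "a \<noteq> b"
  shows "(twisted_diff (emb a) ^^ n) u = (\<lambda>_. 0) \<Longrightarrow> \<forall>m. twisted_diff (emb b) u m \<in> W \<Longrightarrow>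
    \<forall>m. u m \<in> W"
proof (induction n arbitrary: u)
  case 0
  then show ?case using subspace_0[OF W] by simp
next
  case (Suc n)
  have "(twisted_diff (emb a) ^^ n) (twisted_diff (emb a) u) = (\<lambda>_. 0)"
    using Suc.prems(1) by (simp add: funpow_Suc_right del: funpow.simps)
  moreover have "\<forall>m. twisted_diff (emb b) (twisted_diff (emb a) u) m \<in> W"
    using subspace_twisted_diff[OF emb W Suc.prems(2)] by (simp add: twisted_diff_commute)
  ultimately have Ea: "\<forall>m. twisted_diff (emb a) u m \<in> W"
    using Suc.IH by blast
  show ?case
  proof
    fix m
    have "twisted_diff (emb b) u m - twisted_diff (emb a) u m = emb (a - b) * u m"
      by (simp add: twisted_diff_def ring_hom_diff[OF emb] algebra_simps)
    then have "emb (a - b) * u m \<in> W"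
      using subspace_diff[OF emb W] Suc.prems(2) Ea by metis
    then show "u m \<in> W"
      using subspace_cancel[OF emb W, of "a - b" "u m"] \<open>a \<noteq> b\<close> by simp
  qed
qed

lemma subspace_split_twisted_kernels:
  assumes emb: "is_ring_hom emb" and W: "is_subspace emb W" and "a \<noteq> b"
    and u: "(twisted_diff (emb a) ^^ n) u = (\<lambda>_. 0)"
  shows "(twisted_diff (emb b) ^^ k) v = (\<lambda>_. 0) \<Longrightarrow> \<forall>m. u m + v m \<in> W \<Longrightarrow> \<forall>m. u m \<in> W"
  using u
proof (induction k arbitrary: u v)
  case (Suc k)
  have "(twisted_diff (emb a) ^^ n) (twisted_diff (emb b) u) =
      twisted_diff (emb b) ((twisted_diff (emb a) ^^ n) u)"
    by (rule funpow_commute[symmetric]) (rule twisted_diff_commute)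
  also have "\<dots> = (\<lambda>_. 0)"
    using Suc.prems(3) by (simp add: twisted_diff_zero)
  finally have "(twisted_diff (emb a) ^^ n) (twisted_diff (emb b) u) = (\<lambda>_. 0)" .
  moreover have "(twisted_diff (emb b) ^^ k) (twisted_diff (emb b) v) = (\<lambda>_. 0)"
    using Suc.prems(1) by (simp add: funpow_Suc_right del: funpow.simps)
  moreover have "\<forall>m. twisted_diff (emb b) u m + twisted_diff (emb b) v m \<in> W"
    using subspace_twisted_diff[OF emb W Suc.prems(2), of b]
    by (simp add: twisted_diff_def algebra_simps)
  ultimately have "\<forall>m. twisted_diff (emb b) u m \<in> W"
    using Suc.IH by blast
  then show ?case
    using subspace_from_twisted_diff[OF emb W \<open>a \<noteq> b\<close> Suc.prems(3)] by blast
qed simp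

lemma subspace_separate_exp_poly:
  assumes emb: "is_ring_hom emb" and W: "is_subspace emb W" and "a \<noteq> b" "a \<noteq> 0" "b \<noteq> 0"
    and "poly_seq A" "poly_seq B"
    and sum: "\<And>m. emb (a ^ m) * A m + emb (b ^ m) * B m \<in> W"
  shows "A m \<in> W" and "B m \<in> W"
proof -
  have left: "A' m \<in> W"
    if "a' \<noteq> b'" "a' \<noteq> 0" "poly_seq A'" "poly_seq B'"
      and "\<forall>m. emb a' ^ m * A' m + emb b' ^ m * B' m \<in> W"
    for a' b' A' B'
  proof -
    obtain n k where n: "(fwd_diff ^^ n) A' = (\<lambda>_. 0)" and k: "(fwd_diff ^^ k) B' = (\<lambda>_. 0)"
      using \<open>poly_seq A'\<close> \<open>poly_seq B'\<close> unfolding poly_seq_def by blast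
    have "(twisted_diff (emb a') ^^ n) (\<lambda>m. emb a' ^ m * A' m) = (\<lambda>_. 0)"
      by (simp add: twisted_diff_funpow_exp n)
    moreover have "(twisted_diff (emb b') ^^ k) (\<lambda>m. emb b' ^ m * B' m) = (\<lambda>_. 0)"
      by (simp add: twisted_diff_funpow_exp k)
    ultimately have "emb a' ^ m * A' m \<in> W"
      using subspace_split_twisted_kernels[OF emb W \<open>a' \<noteq> b'\<close>] that(5) by blast
    then show ?thesis
      using subspace_cancel[OF emb W, of "a' ^ m"] \<open>a' \<noteq> 0\<close> by (simp add: ring_hom_power[OF emb])
  qed
  have "\<forall>m. emb a ^ m * A m + emb b ^ m * B m \<in> W"
    using sum by (simp add: ring_hom_power[OF emb])
  then show "A m \<in> W" "B m \<in> W"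
    using left[of a b A B] left[of b a B A] assms(3-7) by (simp_all add: add.commute)
qed

lemma poly_induct_ring_hom:
  assumes h: "is_ring_hom h"
    and add: "\<And>x y. R x \<Longrightarrow> R y \<Longrightarrow> R (x + y)" and mult: "\<And>x y. R x \<Longrightarrow> R y \<Longrightarrow> R (x * y)"
    and const: "\<And>a. R (h [:a:])" and var: "R (h [:0, 1:])"
  shows "R (h p)"
proof (induction p)
  case 0
  then show ?case using const[of 0] by simp
next
  case (pCons a p)
  have "h (pCons a p) = h [:a:] + h [:0, 1:] * h p"
    by (simp add: ring_hom_add[OF h, symmetric] ring_hom_mult[OF h, symmetric])
  then show ?case using add[OF const mult[OF var pCons.IH]] by simp
qed

type_synonym poly4 = "complex poly poly poly poly"

definition const4 :: "complex \<Rightarrow> poly4" where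
  "const4 c = [:[:[:[:c:]:]:]:]"

definition X1 :: poly4 where "X1 = [:[:[:[:0, 1:]:]:]:]"
definition Y1 :: poly4 where "Y1 = [:[:[:0, 1:]:]:]"
definition X2 :: poly4 where "X2 = [:[:0, 1:]:]"
definition Y2 :: poly4 where "Y2 = [:0, 1:]"

lemma is_ring_hom_const4: "is_ring_hom const4"
  unfolding is_ring_hom_def const4_def by (simp add: one_pCons)

lemma poly4_induct:
  assumes add: "\<And>P Q. R P \<Longrightarrow> R Q \<Longrightarrow> R (P + Q)" and mult: "\<And>P Q. R P \<Longrightarrow> R Q \<Longrightarrow> R (P * Q)"
    and const: "\<And>c. R (const4 c)" and "R X1" "R Y1" "R X2" "R Y2"
  shows "R P"
proof -
  have hom: "is_ring_hom (\<lambda>a. [:a:])" "is_ring_hom (\<lambda>a. [:[:a:]:])" "is_ring_hom (\<lambda>a. [:[:[:a:]:]:])"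
    by (simp_all add: is_ring_hom_def one_pCons)
  have "R [:[:[:a:]:]:]" for a
    using poly_induct_ring_hom[where h = "\<lambda>a. [:[:[:a:]:]:]", OF hom(3) add mult]
      const \<open>R X1\<close> unfolding const4_def X1_def by blast
  then have "R [:[:a:]:]" for a
    using poly_induct_ring_hom[where h = "\<lambda>a. [:[:a:]:]", OF hom(2) add mult] \<open>R Y1\<close>
    unfolding Y1_def by blast
  then have "R [:a:]" for a
    using poly_induct_ring_hom[where h = "\<lambda>a. [:a:]", OF hom(1) add mult] \<open>R X2\<close>
    unfolding X2_def by blast
  then show "R P"
    using poly_induct_ring_hom[where h = "\<lambda>a. a", OF is_ring_hom_id add mult] \<open>R Y2\<close>
    unfolding Y2_def by blast
qed

lemma ring_hom_poly4_eqI: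
  assumes f: "is_ring_hom f" and g: "is_ring_hom g" and const: "\<And>c. f (const4 c) = g (const4 c)"
    and "f X1 = g X1" "f Y1 = g Y1" "f X2 = g X2" "f Y2 = g Y2"
  shows "f P = g P"
  by (induction P rule: poly4_induct)
    (simp_all add: assms ring_hom_add[OF f] ring_hom_add[OF g] ring_hom_mult[OF f] ring_hom_mult[OF g])

text \<open>\<open>shift4 a b c d F = F(X1 + a, Y1 + b, X2 + c, Y2 + d)\<close>\<close>

definition shift4 :: "int \<Rightarrow> int \<Rightarrow> int \<Rightarrow> int \<Rightarrow> poly4 \<Rightarrow> poly4" where
  "shift4 a b c d F =
     map_poly (map_poly (map_poly (translate (of_int a))))
       (map_poly (map_poly (translate (of_int b))) (map_poly (translate (of_int c)) (translate (of_int d) F)))"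

lemma is_ring_hom_shift4: "is_ring_hom (shift4 a b c d)"
proof -
  have "is_ring_hom (map_poly (map_poly (map_poly (translate (of_int a)))) :: poly4 \<Rightarrow> poly4)"
    "is_ring_hom (map_poly (map_poly (translate (of_int b))) :: poly4 \<Rightarrow> poly4)"
    "is_ring_hom (map_poly (translate (of_int c)) :: poly4 \<Rightarrow> poly4)"
    "is_ring_hom (translate (of_int d) :: poly4 \<Rightarrow> poly4)"
    by (intro is_ring_hom_map_poly is_ring_hom_translate)+
  then show ?thesis
    unfolding is_ring_hom_def shift4_def by simp
qed

lemma shift4_const4 [simp]: "shift4 a b c d (const4 e) = const4 e"
  by (simp add: shift4_def const4_def map_poly_pCons translate_def)

lemma shift4_X1 [simp]: "shift4 a b c d X1 = X1 + of_int a"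
  by (simp add: shift4_def X1_def map_poly_pCons translate_var of_int_poly)

lemma shift4_Y1 [simp]: "shift4 a b c d Y1 = Y1 + of_int b"
  by (simp add: shift4_def Y1_def map_poly_pCons translate_var of_int_poly)

lemma shift4_X2 [simp]: "shift4 a b c d X2 = X2 + of_int c"
  by (simp add: shift4_def X2_def map_poly_pCons translate_var of_int_poly)

lemma shift4_Y2 [simp]: "shift4 a b c d Y2 = Y2 + of_int d"
  by (simp add: shift4_def Y2_def map_poly_pCons translate_var of_int_poly)

text \<open>Both sides are ring homomorphisms fixing the constants, so it suffices to compare them on
  the variables.\<close>

lemma shift4_shift4:
  "shift4 a b c d (shift4 a' b' c' d' F) = shift4 (a + a') (b + b') (c + c') (d + d') F"
proof -
  have "is_ring_hom (\<lambda>F. shift4 a b c d (shift4 a' b' c' d' F))"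
    by (rule is_ring_hom_comp[OF is_ring_hom_shift4 is_ring_hom_shift4])
  then show ?thesis
    by (rule ring_hom_poly4_eqI[OF _ is_ring_hom_shift4])
      (simp_all add: ring_hom_add[OF is_ring_hom_shift4] ring_hom_of_int[OF is_ring_hom_shift4] add_ac)
qed

lemma shift4_0 [simp]: "shift4 0 0 0 0 F = F"
  by (simp add: shift4_def)

lemma shift4_diff: "shift4 a b c d (F - G) = shift4 a b c d F - shift4 a b c d G"
  by (rule ring_hom_diff[OF is_ring_hom_shift4])

lemma funpow_shift4: "(shift4 a b c d ^^ n) F = shift4 (int n * a) (int n * b) (int n * c) (int n * d) F"
  by (induction n) (simp_all add: shift4_shift4 algebra_simps)

lemma shift4_unit:
  "shift4 a 0 0 0 = map_poly (map_poly (map_poly (translate (of_int a))))"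
  "shift4 0 b 0 0 = map_poly (map_poly (translate (of_int b)))"
  "shift4 0 0 c 0 = map_poly (translate (of_int c))"
  "shift4 0 0 0 d = translate (of_int d)"
  by (simp_all add: shift4_def[abs_def])

lemma locally_nilpotent_shift4_diff:
  "locally_nilpotent (\<lambda>G. shift4 (-1) 0 0 0 G - G)"
  "locally_nilpotent (\<lambda>G. shift4 0 (-1) 0 0 G - G)"
  "locally_nilpotent (\<lambda>G. shift4 0 0 (-1) 0 G - G)"
  "locally_nilpotent (\<lambda>G. shift4 0 0 0 (-1) G - G)"
  by (simp_all add: shift4_unit locally_nilpotent_map_poly_diff locally_nilpotent_translate_diff)

lemma locally_nilpotent_shift4_diff_shifted:
  "locally_nilpotent (\<lambda>G. shift4 (-1) (-1) 0 0 G - shift4 (-1) 0 0 0 G)"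
  "locally_nilpotent (\<lambda>G. shift4 0 0 (-1) (-1) G - shift4 0 0 (-1) 0 G)"
proof -
  note simps = shift4_diff shift4_shift4 ring_hom_0[OF is_ring_hom_shift4]
  have "locally_nilpotent (\<lambda>G. shift4 (-1) 0 0 0 (shift4 0 (-1) 0 0 G - G))"
    by (rule locally_nilpotent_comp[OF _ _ locally_nilpotent_shift4_diff(2)]) (simp_all add: simps)
  moreover have "locally_nilpotent (\<lambda>G. shift4 0 0 (-1) 0 (shift4 0 0 0 (-1) G - G))"
    by (rule locally_nilpotent_comp[OF _ _ locally_nilpotent_shift4_diff(4)]) (simp_all add: simps)
  ultimately show "locally_nilpotent (\<lambda>G. shift4 (-1) (-1) 0 0 G - shift4 (-1) 0 0 0 G)"
    "locally_nilpotent (\<lambda>G. shift4 0 0 (-1) (-1) G - shift4 0 0 (-1) 0 G)"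
    by (simp_all add: simps)
qed

lemma shift4_invariant_const:
  assumes "shift4 (-1) 0 0 0 G = G" "shift4 0 (-1) 0 0 G = G"
    and "shift4 0 0 (-1) 0 G = G" "shift4 0 0 0 (-1) G = G"
  shows "\<exists>c. G = const4 c"
proof -
  have inv: "translate (-1) p = p \<Longrightarrow> p = [:coeff p 0:]" for p :: "'a::{idom,ring_char_0} poly"
    by (rule translate_invariant_const[of "-1"]) simp_all
  define g3 where "g3 = coeff G 0"
  define g2 where "g2 = coeff g3 0"
  define g1 where "g1 = coeff g2 0"
  have G3: "G = [:g3:]"
    unfolding g3_def by (rule inv) (use assms(4) in \<open>simp add: shift4_unit\<close>)
  have "translate (-1) g3 = g3"
    using assms(3) G3 by (simp add: shift4_unit map_poly_pCons)
  then have "g3 = [:g2:]"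
    unfolding g2_def by (rule inv)
  then have G2: "G = [:[:g2:]:]"
    using G3 by simp
  have "translate (-1) g2 = g2"
    using assms(2) G2 by (simp add: shift4_unit map_poly_pCons)
  then have "g2 = [:g1:]"
    unfolding g1_def by (rule inv)
  then have G1: "G = [:[:[:g1:]:]:]"
    using G2 by simp
  have "translate (-1) g1 = g1"
    using assms(1) G1 by (simp add: shift4_unit map_poly_pCons)
  then have "g1 = [:coeff g1 0:]"
    by (rule inv)
  with G1 have "G = const4 (coeff g1 0)"
    unfolding const4_def by simp
  then show ?thesis ..
qed

section \<open>The action on the tensor product\<close>

lemma map_poly2_scaled:
  assumes "g 0 = 0"
  shows "map_poly (map_poly (\<lambda>f. c * g f)) F = [:[:c:]:] * map_poly (map_poly g) F"
proof -
  have "map_poly (\<lambda>f. c * g f) = (\<lambda>p. [:c:] * map_poly g p)"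
    by (intro ext poly_eqI) (simp add: coeff_map_poly assms)
  then show ?thesis
    by (intro poly_eqI) (simp add: coeff_map_poly assms)
qed

lemma shY_eq_translate: "shY m = translate (- of_int m)"
  by (rule ext) (simp add: shY_def translate_def)

lemma shX_eq_map_poly_translate: "shX = map_poly (translate (-1))"
  by (rule ext) (simp add: shX_def translate_def[abs_def])

lemma tensor_act_H:
  "tensor_act l1 e1 s1 l2 e2 s2 (H m) F =
     const4 (l1 powi m) * X1 * shift4 0 (-m) 0 0 F + const4 (l2 powi m) * X2 * shift4 0 0 0 (-m) F"
proof -
  have act: "omega_act id l1 e1 s1 (H m) = (\<lambda>f. ([:[:l1 powi m:]:] * varX) * shY m f)"
    by (rule ext) (simp add: omega_act_def)
  have "map_poly (map_poly (omega_act id l1 e1 s1 (H m))) F =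
      [:[:[:[:l1 powi m:]:] * varX:]:] * map_poly (map_poly (shY m)) F"
    unfolding act by (rule map_poly2_scaled) (simp add: shY_def)
  also have "\<dots> = const4 (l1 powi m) * X1 * shift4 0 (-m) 0 0 F"
    by (simp add: const4_def X1_def varX_def shift4_unit shY_eq_translate)
  finally show ?thesis
    unfolding tensor_act_def
    by (simp add: omega_act_def const4_def X2_def varX_def shift4_unit shY_eq_translate)
qed

lemma tensor_act_L:
  "tensor_act l1 e1 s1 l2 e2 s2 (L m) F =
     const4 (l1 powi m) * (Y1 - of_int m * X1 + const4 (of_int m * e1)) * shift4 0 (-m) 0 0 F
   + const4 (l2 powi m) * (Y2 - of_int m * X2 + const4 (of_int m * e2)) * shift4 0 0 0 (-m) F"
proof -
  have act: "omega_act id l1 e1 s1 (L m) =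
      (\<lambda>f. ([:[:l1 powi m:]:] * (varY - of_int m * varX + [:[:of_int m * e1:]:])) * shY m f)"
    by (rule ext) (simp add: omega_act_def)
  have "map_poly (map_poly (omega_act id l1 e1 s1 (L m))) F =
      [:[:[:[:l1 powi m:]:] * (varY - of_int m * varX + [:[:of_int m * e1:]:]):]:] *
      map_poly (map_poly (shY m)) F"
    unfolding act by (rule map_poly2_scaled) (simp add: shY_def)
  also have "\<dots> = const4 (l1 powi m) * (Y1 - of_int m * X1 + const4 (of_int m * e1)) * shift4 0 (-m) 0 0 F"
    by (simp add: const4_def X1_def Y1_def varX_def varY_def shift4_unit shY_eq_translate of_int_poly)
  finally show ?thesis
    unfolding tensor_act_def
    by (simp add: omega_act_def const4_def X2_def Y2_def varX_def varY_def shift4_unit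
        shY_eq_translate of_int_poly)
qed

lemma tensor_act_I:
  "tensor_act l1 e1 s1 l2 e2 s2 (I m) F =
     const4 (l1 powi m * s1) * shift4 (-1) (-m) 0 0 F + const4 (l2 powi m * s2) * shift4 0 0 (-1) (-m) F"
proof -
  have act: "omega_act id l1 e1 s1 (I m) = (\<lambda>f. [:[:l1 powi m * s1:]:] * shY m (shX f))"
    by (rule ext) (simp add: omega_act_def)
  have shifts: "map_poly (map_poly (\<lambda>f. shY m (shX f))) F = shift4 (-1) (-m) 0 0 F"
    using shift4_shift4[of 0 "-m" 0 0 "-1" 0 0 0 F]
    by (simp add: shift4_unit shY_eq_translate shX_eq_map_poly_translate map_poly_map_poly o_def)
  have "map_poly (map_poly (omega_act id l1 e1 s1 (I m))) F =
      [:[:[:[:l1 powi m * s1:]:]:]:] * map_poly (map_poly (\<lambda>f. shY m (shX f))) F"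
    unfolding act by (rule map_poly2_scaled) (simp add: shY_def shX_def)
  then have "map_poly (map_poly (omega_act id l1 e1 s1 (I m))) F =
      const4 (l1 powi m * s1) * shift4 (-1) (-m) 0 0 F"
    unfolding shifts const4_def .
  moreover have "shY m (shX F) = shift4 0 0 (-1) (-m) F"
    using shift4_shift4[of 0 0 0 "-m" 0 0 "-1" 0 F]
    by (simp add: shift4_unit shY_eq_translate shX_eq_map_poly_translate)
  ultimately show ?thesis
    unfolding tensor_act_def by (simp add: omega_act_def const4_def)
qed

lemma map_poly_zero_fun: "map_poly (\<lambda>_. 0) = (\<lambda>_. 0)"
  by (intro ext poly_eqI) (simp add: coeff_map_poly)

lemma tensor_act_J: "tensor_act l1 e1 s1 l2 e2 s2 (J m) F = 0"
  unfolding tensor_act_def omega_act_def by (simp add: map_poly_zero_fun)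

section \<open>Irreducibility for distinct \<open>lam1\<close>, \<open>lam2\<close>\<close>

lemma is_submodule_iff:
  "is_submodule act emb W \<longleftrightarrow> is_subspace emb W \<and> (\<forall>g. \<forall>x\<in>W. act g x \<in> W)"
  unfolding is_submodule_def is_subspace_def by blast

lemma poly_seq_shift4:
  "poly_seq (\<lambda>m. shift4 0 (- int m) 0 0 G)" "poly_seq (\<lambda>m. shift4 0 0 0 (- int m) G)"
  using poly_seq_funpow[OF shift4_diff locally_nilpotent_shift4_diff(2), of G]
    poly_seq_funpow[OF shift4_diff locally_nilpotent_shift4_diff(4), of G]
  by (simp_all add: funpow_shift4)

lemma tensor_submodule_closed:
  assumes W: "is_submodule (tensor_act l1 e1 s1 l2 e2 s2) const4 W"
    and "l1 \<noteq> l2" "l1 \<noteq> 0" "l2 \<noteq> 0" "s1 \<noteq> 0" "s2 \<noteq> 0" and "F \<in> W"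
  shows "X1 * F \<in> W" "X2 * F \<in> W" "Y1 * F \<in> W" "Y2 * F \<in> W"
    and "shift4 (-1) 0 0 0 F \<in> W" "shift4 0 0 (-1) 0 F \<in> W"
    and "shift4 (-1) (-1) 0 0 F \<in> W" "shift4 0 0 (-1) (-1) F \<in> W"
proof -
  have sub: "is_subspace const4 W" and act: "\<And>g. tensor_act l1 e1 s1 l2 e2 s2 g F \<in> W"
    using W \<open>F \<in> W\<close> unfolding is_submodule_iff by auto
  note separate = subspace_separate_exp_poly[OF is_ring_hom_const4 sub \<open>l1 \<noteq> l2\<close> \<open>l1 \<noteq> 0\<close> \<open>l2 \<noteq> 0\<close>]
  note seq = poly_seq_shift4 poly_seq_cmult poly_seq_add poly_seq_diff poly_seq_of_nat_mult
  have "const4 (l1 ^ m) * (X1 * shift4 0 (- int m) 0 0 F)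
      + const4 (l2 ^ m) * (X2 * shift4 0 0 0 (- int m) F) \<in> W" for m
    using act[of "H (int m)"] by (simp add: tensor_act_H mult.assoc)
  from separate[OF _ _ this, of 0] show "X1 * F \<in> W" "X2 * F \<in> W"
    by (simp_all add: seq)
  have "const4 (l1 ^ m) * (Y1 * shift4 0 (- int m) 0 0 F - of_nat m * (X1 * shift4 0 (- int m) 0 0 F)
          + of_nat m * (const4 e1 * shift4 0 (- int m) 0 0 F))
      + const4 (l2 ^ m) * (Y2 * shift4 0 0 0 (- int m) F - of_nat m * (X2 * shift4 0 0 0 (- int m) F)
          + of_nat m * (const4 e2 * shift4 0 0 0 (- int m) F)) \<in> W" for m
    using act[of "L (int m)"]
    by (simp add: tensor_act_L ring_hom_mult[OF is_ring_hom_const4] ring_hom_of_nat[OF is_ring_hom_const4]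
        algebra_simps)
  from separate[OF _ _ this, of 0] show "Y1 * F \<in> W" "Y2 * F \<in> W"
    by (simp_all add: seq)
  have "const4 (l1 ^ m) * (const4 s1 * shift4 0 (- int m) 0 0 (shift4 (-1) 0 0 0 F))
      + const4 (l2 ^ m) * (const4 s2 * shift4 0 0 0 (- int m) (shift4 0 0 (-1) 0 F)) \<in> W" for m
    using act[of "I (int m)"]
    by (simp add: tensor_act_I shift4_shift4 ring_hom_mult[OF is_ring_hom_const4] mult.assoc)
  from separate[OF _ _ this] have "const4 s1 * shift4 0 (- int m) 0 0 (shift4 (-1) 0 0 0 F) \<in> W"
      "const4 s2 * shift4 0 0 0 (- int m) (shift4 0 0 (-1) 0 F) \<in> W" for m
    by (simp_all add: seq)
  then have "shift4 (-1) (- int m) 0 0 F \<in> W" "shift4 0 0 (-1) (- int m) F \<in> W" for m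
    using subspace_cancel[OF is_ring_hom_const4 sub \<open>s1 \<noteq> 0\<close>, of "shift4 (-1) (- int m) 0 0 F"]
      subspace_cancel[OF is_ring_hom_const4 sub \<open>s2 \<noteq> 0\<close>, of "shift4 0 0 (-1) (- int m) F"]
    by (simp_all add: shift4_shift4)
  from this[of 0] this[of 1] show "shift4 (-1) 0 0 0 F \<in> W" "shift4 0 0 (-1) 0 F \<in> W"
      "shift4 (-1) (-1) 0 0 F \<in> W" "shift4 0 0 (-1) (-1) F \<in> W"
    by simp_all
qed

lemma subspace_mult_closed:
  assumes W: "is_subspace const4 W"
    and "\<And>F. F \<in> W \<Longrightarrow> X1 * F \<in> W" "\<And>F. F \<in> W \<Longrightarrow> Y1 * F \<in> W"
    and "\<And>F. F \<in> W \<Longrightarrow> X2 * F \<in> W" "\<And>F. F \<in> W \<Longrightarrow> Y2 * F \<in> W"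
    and "F \<in> W"
  shows "P * F \<in> W"
proof -
  have "\<forall>F\<in>W. P * F \<in> W"
    by (induction P rule: poly4_induct)
      (simp_all add: assms distrib_right subspace_add[OF W] subspace_scale[OF W] mult.assoc)
  then show ?thesis using \<open>F \<in> W\<close> by blast
qed

lemma tensor_submodule_shift_invariant:
  assumes W: "is_submodule (tensor_act l1 e1 s1 l2 e2 s2) const4 W"
    and "l1 \<noteq> l2" "l1 \<noteq> 0" "l2 \<noteq> 0" "s1 \<noteq> 0" "s2 \<noteq> 0" and "W \<noteq> {0}"
  obtains G where "G \<in> W" "G \<noteq> 0"
    and "shift4 (-1) 0 0 0 G = G" "shift4 0 (-1) 0 0 G = G"
    and "shift4 0 0 (-1) 0 G = G" "shift4 0 0 0 (-1) G = G"
proof -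
  have sub: "is_subspace const4 W"
    using W unfolding is_submodule_iff by blast
  note closed = tensor_submodule_closed[OF W \<open>l1 \<noteq> l2\<close> \<open>l1 \<noteq> 0\<close> \<open>l2 \<noteq> 0\<close> \<open>s1 \<noteq> 0\<close> \<open>s2 \<noteq> 0\<close>]
  obtain G0 where "G0 \<in> W" "G0 \<noteq> 0"
    using \<open>W \<noteq> {0}\<close> subspace_0[OF sub] by blast
  \<comment> \<open>\<open>I\<^sub>m\<close> translates \<open>Y1\<close> (resp. \<open>Y2\<close>) only together with \<open>X1\<close> (resp. \<open>X2\<close>), hence the extra
    \<open>X\<close>-translation in the last two operators.\<close>
  define Ds where "Ds =
    [\<lambda>G. shift4 (-1) 0 0 0 G - G,
     \<lambda>G. shift4 0 0 (-1) 0 G - G,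
     \<lambda>G. shift4 (-1) (-1) 0 0 G - shift4 (-1) 0 0 0 G,
     \<lambda>G. shift4 0 0 (-1) (-1) G - shift4 0 0 (-1) 0 G]"
  have "\<forall>D\<in>set Ds. D 0 = 0 \<and> locally_nilpotent D \<and> (\<forall>x\<in>W. D x \<in> W)"
    unfolding Ds_def
    by (simp add: shift4_diff shift4_shift4 ring_hom_0[OF is_ring_hom_shift4]
        locally_nilpotent_shift4_diff locally_nilpotent_shift4_diff_shifted
        subspace_diff[OF is_ring_hom_const4 sub] closed)
  moreover have "\<forall>D\<in>set Ds. \<forall>D'\<in>set Ds. \<forall>x. D (D' x) = D' (D x)"
    unfolding Ds_def by (simp add: shift4_diff shift4_shift4 algebra_simps)
  ultimately obtain G where "G \<in> W" "G \<noteq> 0" and "\<forall>D\<in>set Ds. D G = 0"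
    using common_kernel_nonzero[OF _ _ \<open>G0 \<in> W\<close> \<open>G0 \<noteq> 0\<close>] by blast
  then have inv: "shift4 (-1) 0 0 0 G = G" "shift4 0 0 (-1) 0 G = G"
      "shift4 (-1) (-1) 0 0 G = G" "shift4 0 0 (-1) (-1) G = G"
    unfolding Ds_def by simp_all
  have "shift4 0 (-1) 0 0 G = G" "shift4 0 0 0 (-1) G = G"
    using shift4_shift4[of 1 0 0 0 "-1" "-1" 0 0 G] shift4_shift4[of 1 0 0 0 "-1" 0 0 0 G]
      shift4_shift4[of 0 0 1 0 0 0 "-1" "-1" G] shift4_shift4[of 0 0 1 0 0 0 "-1" 0 G]
    by (simp_all add: inv)
  with inv that \<open>G \<in> W\<close> \<open>G \<noteq> 0\<close> show ?thesis
    by blast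
qed

lemma tensor_submodule_eq_UNIV:
  assumes W: "is_submodule (tensor_act l1 e1 s1 l2 e2 s2) const4 W"
    and "l1 \<noteq> l2" "l1 \<noteq> 0" "l2 \<noteq> 0" "s1 \<noteq> 0" "s2 \<noteq> 0" and "W \<noteq> {0}"
  shows "W = UNIV"
proof -
  have sub: "is_subspace const4 W"
    using W unfolding is_submodule_iff by blast
  obtain G where "G \<in> W" "G \<noteq> 0"
    and "shift4 (-1) 0 0 0 G = G" "shift4 0 (-1) 0 0 G = G"
    and "shift4 0 0 (-1) 0 G = G" "shift4 0 0 0 (-1) G = G"
    using tensor_submodule_shift_invariant[OF assms] by blast
  then obtain c where "G = const4 c"
    using shift4_invariant_const by blast
  moreover from this \<open>G \<noteq> 0\<close> have "c \<noteq> 0"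
    by (auto simp: ring_hom_0[OF is_ring_hom_const4])
  ultimately have "const4 (inverse c) * G = 1"
    by (simp add: ring_hom_mult[OF is_ring_hom_const4, symmetric] ring_hom_1[OF is_ring_hom_const4])
  then have "1 \<in> W"
    using subspace_scale[OF sub \<open>G \<in> W\<close>, of "inverse c"] by simp
  note closed = tensor_submodule_closed[OF W \<open>l1 \<noteq> l2\<close> \<open>l1 \<noteq> 0\<close> \<open>l2 \<noteq> 0\<close> \<open>s1 \<noteq> 0\<close> \<open>s2 \<noteq> 0\<close>]
  have "P \<in> W" for P
    using subspace_mult_closed[OF sub closed(1,3,2,4) \<open>1 \<in> W\<close>, of P] by simp
  then show ?thesis
    by blast
qed

section \<open>A proper submodule for \<open>lam1 = lam2\<close>\<close>

definition antidiagonal_invariant :: "poly4 set" where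
  "antidiagonal_invariant = {F. \<forall>s t. shift4 s t (-s) (-t) F = F}"

lemma antidiagonal_invariant_shift4:
  assumes "F \<in> antidiagonal_invariant"
  shows "shift4 a b c d F = shift4 (a + c) (b + d) 0 0 F"
proof -
  have "shift4 a b c d F = shift4 a b c d (shift4 c d (-c) (-d) F)"
    using assms unfolding antidiagonal_invariant_def by simp
  then show ?thesis
    by (simp add: shift4_shift4)
qed

lemma shift4_antidiagonal_fix:
  assumes "F \<in> antidiagonal_invariant"
  shows "shift4 s t (-s) (-t) (shift4 a b 0 0 F) = shift4 a b 0 0 F"
  using antidiagonal_invariant_shift4[OF assms, of "s + a" "t + b" "-s" "-t"] by (simp add: shift4_shift4)

lemma antidiagonal_invariant_closed:
  assumes F: "F \<in> antidiagonal_invariant"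
  shows "tensor_act l e1 s1 l e2 s2 g F \<in> antidiagonal_invariant"
proof -
  note hom = ring_hom_add[OF is_ring_hom_shift4] ring_hom_diff[OF is_ring_hom_shift4]
    ring_hom_mult[OF is_ring_hom_shift4] ring_hom_of_int[OF is_ring_hom_shift4]
    shift4_antidiagonal_fix[OF F]
  have "shift4 s t (-s) (-t) (tensor_act l e1 s1 l e2 s2 g F) = tensor_act l e1 s1 l e2 s2 g F" for s t
  proof (cases g)
    case (L m)
    show ?thesis
      unfolding L tensor_act_L antidiagonal_invariant_shift4[OF F, of 0 0 0 "-m"]
      by (simp add: hom algebra_simps)
  next
    case (H m)
    show ?thesis
      unfolding H tensor_act_H antidiagonal_invariant_shift4[OF F, of 0 0 0 "-m"]
      by (simp add: hom algebra_simps)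
  next
    case (I m)
    show ?thesis
      unfolding I tensor_act_I antidiagonal_invariant_shift4[OF F, of 0 0 "-1" "-m"]
      by (simp add: hom)
  next
    case (J m)
    show ?thesis
      unfolding J tensor_act_J by (simp add: ring_hom_0[OF is_ring_hom_shift4])
  qed
  then show ?thesis
    unfolding antidiagonal_invariant_def by blast
qed

lemma antidiagonal_invariant_submodule:
  "is_submodule (tensor_act l e1 s1 l e2 s2) const4 antidiagonal_invariant"
  unfolding is_submodule_iff is_subspace_def
  using antidiagonal_invariant_closed
  by (auto simp: antidiagonal_invariant_def ring_hom_0[OF is_ring_hom_shift4]
      ring_hom_add[OF is_ring_hom_shift4] ring_hom_mult[OF is_ring_hom_shift4])

lemma antidiagonal_invariant_proper: "antidiagonal_invariant \<noteq> {0}" "antidiagonal_invariant \<noteq> UNIV"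
proof -
  have "1 \<in> antidiagonal_invariant"
    unfolding antidiagonal_invariant_def by (simp add: ring_hom_1[OF is_ring_hom_shift4])
  then show "antidiagonal_invariant \<noteq> {0}"
    by (metis one_neq_zero singletonD)
  have "\<exists>s t. shift4 s t (-s) (-t) X1 \<noteq> X1"
    by (intro exI[of _ 1] exI[of _ 0]) simp
  then show "antidiagonal_invariant \<noteq> UNIV"
    unfolding antidiagonal_invariant_def by blast
qed

theorem theorem4p5:
  fixes lam1 lam2 sig1 sig2 eta1 eta2 :: complex
  assumes "lam1 \<noteq> 0" and "lam2 \<noteq> 0" and "sig1 \<noteq> 0" and "sig2 \<noteq> 0"
  shows "irreducible_module (tensor_act lam1 eta1 sig1 lam2 eta2 sig2)
           (\<lambda>c. [:[:[:[:c:]:]:]:]) \<longleftrightarrow> lam1 \<noteq> lam2"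
proof -
  have emb: "(\<lambda>c. [:[:[:[:c:]:]:]:]) = const4"
    by (rule ext) (simp add: const4_def)
  have "irreducible_module (tensor_act lam1 eta1 sig1 lam2 eta2 sig2) const4 \<longleftrightarrow> lam1 \<noteq> lam2"
  proof
    assume irreducible: "irreducible_module (tensor_act lam1 eta1 sig1 lam2 eta2 sig2) const4"
    show "lam1 \<noteq> lam2"
    proof
      assume "lam1 = lam2"
      then have "is_submodule (tensor_act lam1 eta1 sig1 lam2 eta2 sig2) const4 antidiagonal_invariant"
        using antidiagonal_invariant_submodule by simp
      with irreducible antidiagonal_invariant_proper show False
        unfolding irreducible_module_def by blast
    qed
  next
    assume "lam1 \<noteq> lam2"
    have "(UNIV :: poly4 set) \<noteq> {0}"
      by (metis UNIV_I one_neq_zero singletonD)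
    with tensor_submodule_eq_UNIV[OF _ \<open>lam1 \<noteq> lam2\<close> assms]
    show "irreducible_module (tensor_act lam1 eta1 sig1 lam2 eta2 sig2) const4"
      unfolding irreducible_module_def by blast
  qed
  then show ?thesis
    unfolding emb .
qed

end
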